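(* Let $m\ge1$, $n=2m$, and let $\mathcal{S}_m\subset\mathcal{S}_n\subset\mathcal{T}$ be nested subsets of the training set of sizes $m$ and $n$, with regularized empirical risks $R_m,R_n$ and minimizers $\mathbf{w}_m^*,\mathbf{w}_n^*$. Let $\mathbf{w}_m$ satisfy $\mathbb{E}[R_m(\mathbf{w}_m)-R_m(\mathbf{w}_m^* )]\le V_m$. Let an iterative descent method (deterministic or stochastic) be applied to $R_n$ which is linearly convergent with factor $0\le\rho_n<1$, i.e., for any initial point $\mathbf{u}_0$, its iterate $\mathbf{u}_s$ after $s$ iterations satisfies $\mathbb{E}[R_n(\mathbf{u}_s)-R_n(\mathbf{w}_n^* )]\le\rho_n^{s}\,(R_n(\mathbf{u}_0)-R_n(\mathbf{w}_n^* ))$ (expectation over the method's internal randomness). Let $\mathbf{w}_n$ be the output of $s_n$ iterations of this method started at $\mathbf{w}_m$. If $$s_n\ \ge\ -\frac{\log\left[3\cdot 2^\alpha+(2^\alpha-1)\left(2+\frac{c}{2}\|\mathbf{w}^*\|^2\right)\right]}{\log\rho_n},$$ then $\mathbb{E}[R_n(\mathbf{w}_n)-R_n(\mathbf{w}_n^* )]\le V_n$.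
   Context: Let $Z$ be a random variable with distribution $P$ on a space $\mathcal{Z}$ and $f:\mathbb{R}^p\times\mathcal{Z}\to\mathbb{R}$ a loss function. The expected loss is $L(\mathbf{w})=\mathbb{E}_Z[f(\mathbf{w},Z)]$ and $\mathbf{w}^*$ denotes a minimizer of $L$. The training set $\mathcal{T}=\{z_1,\dots,z_N\}$ consists of $N$ independent samples from $P$. For a (fixed, data-independent) subset $\mathcal{S}\subseteq\mathcal{T}$ with $k$ elements, the empirical loss is $L_{\mathcal{S}}(\mathbf{w})=\frac1k\sum_{z\in\mathcal{S}}f(\mathbf{w},z)$; for the sets $\mathcal{S}_k$ we write $L_k=L_{\mathcal{S}_k}$. Statistical accuracy: $V_k=\gamma/k^\alpha$ with constants $\gamma>0$ and $\alpha\in[0.5,1]$, and it is assumed that for every $k$ and every set $\mathcal{S}$ of $k$ independent samples from $P$, $\mathbb{E}[\sup_{\mathbf{w}\in\mathbb{R}^p}|L(\mathbf{w})-L_{\mathcal{S}}(\mathbf{w})|]\le V_k$ (expectation over the samples). For a constant $c>0$ the regularized empirical risk is $R_k(\mathbf{w})=L_k(\mathbf{w})+\frac{cV_k}{2}\|\mathbf{w}\|^2$, with minimizer $\mathbf{w}_k^*$. Assumption: for every $z$, $f(\cdot,z)$ is convex with $M$-Lipschitz continuous gradient. In the conclusion the expectation is over the training samples and the randomness of the method. *)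

theory Defs
  imports "HOL-Probability.Probability"
begin

definition stat_acc :: "real \<Rightarrow> real \<Rightarrow> nat \<Rightarrow> real" where
  "stat_acc \<gamma> \<alpha> k = \<gamma> / (real k powr \<alpha>)"

definition exp_loss :: "'z measure \<Rightarrow> ('w \<Rightarrow> 'z \<Rightarrow> real) \<Rightarrow> 'w \<Rightarrow> real" where
  "exp_loss P f w = (\<integral>z. f w z \<partial>P)"

definition emp_loss :: "('w \<Rightarrow> 'z \<Rightarrow> real) \<Rightarrow> (nat \<Rightarrow> 'z) \<Rightarrow> nat set \<Rightarrow> 'w \<Rightarrow> real" where
  "emp_loss f z S w = (\<Sum>i\<in>S. f w (z i)) / real (card S)"

definition reg_risk :: "('w::real_normed_vector \<Rightarrow> 'z \<Rightarrow> real) \<Rightarrow> (nat \<Rightarrow> 'z) \<Rightarrow> nat set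
    \<Rightarrow> real \<Rightarrow> real \<Rightarrow> real \<Rightarrow> 'w \<Rightarrow> real" where
  "reg_risk f z S c \<gamma> \<alpha> w = emp_loss f z S w + c * stat_acc \<gamma> \<alpha> (card S) / 2 * (norm w)\<^sup>2"

end

theory Submission
  imports Defs
begin

text \<open>Split S_n into S_m and its complement S_n - S_m, which also has m elements. Then L_{S_n}
  is the average of the empirical losses of the two halves and V_m = 2^alpha V_n, so the gap
  R_n(w_m) - R_n(w_n^*) is at most the gap R_m(w_m) - R_m(w_m^*), plus deviations |L - L_S| at
  w_m and w_n^* on both halves, plus the regularisation surplus (2^alpha - 1) c V_n/2 |w_n^*|^2.
  Optimality of w_n^* for R_n, compared with the population minimiser w^*, bounds this surplus by
  deviations on S_n and (2^alpha - 1) c V_n/2 |w^*|^2. In expectation every deviation costs at most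
  V_m = 2^alpha V_n, so the warm start w_m has expected R_n-gap at most
  (3 2^alpha + (2^alpha - 1)(2 + c/2 |w^*|^2)) V_n, a factor that s_n linearly convergent steps
  push below 1.\<close>

lemma (in prob_space) indep_sets_reindex:
  assumes ind: "indep_sets F I" and inj: "inj_on e J" and sub: "e ` J \<subseteq> I"
  shows "indep_sets (\<lambda>j. F (e j)) J"
  unfolding indep_sets_def
proof (intro conjI ballI allI impI)
  fix j assume "j \<in> J"
  then show "F (e j) \<subseteq> events" using ind sub unfolding indep_sets_def by auto
next
  fix J' A assume J': "J' \<subseteq> J" "J' \<noteq> {}" "finite J'" and A: "A \<in> Pi J' (\<lambda>j. F (e j))"
  define B where "B = (\<lambda>i. A (the_inv_into J' e i))"
  have inj': "inj_on e J'" using inj J' inj_on_subset by blast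
  have B: "B (e j) = A j" if "j \<in> J'" for j using that inj' by (simp add: B_def the_inv_into_f_f)
  have "B \<in> Pi (e ` J') F" using A B by auto
  moreover have "e ` J' \<subseteq> I" "e ` J' \<noteq> {}" "finite (e ` J')" using J' sub by auto
  ultimately have "prob (\<Inter>i\<in>e ` J'. B i) = (\<Prod>i\<in>e ` J'. prob (B i))"
    using ind unfolding indep_sets_def by blast
  moreover have "(\<Inter>i\<in>e ` J'. B i) = (\<Inter>j\<in>J'. A j)" using B by auto
  moreover have "(\<Prod>i\<in>e ` J'. prob (B i)) = (\<Prod>j\<in>J'. prob (A j))"
    using prod.reindex[OF inj', of "\<lambda>i. prob (B i)"] B by simp
  ultimately show "prob (\<Inter>j\<in>J'. A j) = (\<Prod>j\<in>J'. prob (A j))" by simp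
qed

lemma (in prob_space) indep_vars_reindex:
  assumes "indep_vars M' X I" and "inj_on e J" and "e ` J \<subseteq> I"
  shows "indep_vars (\<lambda>j. M' (e j)) (\<lambda>j. X (e j)) J"
  using assms indep_sets_reindex[OF _ assms(2,3), of "\<lambda>i. {X i -` A \<inter> space M | A. A \<in> sets (M' i)}"]
  unfolding indep_vars_def2 by auto

lemma SUP_eq_SUP_dense:
  fixes g :: "'a::topological_space \<Rightarrow> 'b::{complete_linorder, linorder_topology}"
  assumes cont: "continuous_on UNIV g" and D: "\<And>X. open X \<Longrightarrow> X \<noteq> {} \<Longrightarrow> \<exists>d\<in>D. d \<in> X"
  shows "(SUP w. g w) = (SUP w\<in>D. g w)"
proof (rule antisym)
  show "(SUP w\<in>D. g w) \<le> (SUP w. g w)" by (rule SUP_subset_mono) auto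
  show "(SUP w. g w) \<le> (SUP w\<in>D. g w)"
  proof (rule SUP_least, rule ccontr)
    fix w assume "\<not> g w \<le> (SUP w\<in>D. g w)"
    then have "w \<in> g -` {(SUP w\<in>D. g w)<..}" by simp
    moreover have "open (g -` {(SUP w\<in>D. g w)<..})"
      using cont open_greaterThan open_vimage by blast
    ultimately obtain d where "d \<in> D" "(SUP w\<in>D. g w) < g d" using D by blast
    then show False using SUP_upper[of d D g] by simp
  qed
qed

lemma borel_measurable_SUP_continuous:
  fixes G :: "'m \<Rightarrow> 'w::euclidean_space \<Rightarrow> ennreal"
  assumes cont: "\<And>x. x \<in> space M \<Longrightarrow> continuous_on UNIV (G x)"
    and meas: "\<And>w. (\<lambda>x. G x w) \<in> borel_measurable M"
  shows "(\<lambda>x. SUP w. G x w) \<in> borel_measurable M"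
proof -
  obtain D :: "'w set" where "countable D" and D: "\<And>X. open X \<Longrightarrow> X \<noteq> {} \<Longrightarrow> \<exists>d\<in>D. d \<in> X"
    by (rule countable_dense_setE) blast
  then have "(\<lambda>x. SUP w\<in>D. G x w) \<in> borel_measurable M"
    using meas by (intro borel_measurable_SUP)
  moreover have "(SUP w\<in>D. G x w) = (SUP w. G x w)" if "x \<in> space M" for x
    using SUP_eq_SUP_dense[OF cont[OF that] D] by simp
  ultimately show ?thesis using measurable_cong by (metis (no_types, lifting))
qed

lemma SUP_ennreal_diff_minimizer:
  fixes R :: "'a \<Rightarrow> real"
  assumes "\<And>w. R w0 \<le> R w"
  shows "(SUP w. ennreal (a - R w)) = ennreal (a - R w0)"
proof (rule antisym)
  show "(SUP w. ennreal (a - R w)) \<le> ennreal (a - R w0)"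
    by (rule SUP_least, rule ennreal_leI) (use assms in auto)
qed (rule SUP_upper, simp)

lemma ennreal_midpoint_le:
  assumes "ennreal u \<le> A" "ennreal v \<le> A"
  shows "ennreal ((u + v) / 2) \<le> A"
proof (cases "u \<le> v")
  case True
  then show ?thesis by (intro order_trans[OF ennreal_leI assms(2)]) simp
next
  case False
  then show ?thesis by (intro order_trans[OF ennreal_leI assms(1)]) simp
qed

lemma borel_measurable_emp_loss:
  fixes f :: "'w::euclidean_space \<Rightarrow> 'z \<Rightarrow> real"
  assumes f: "(\<lambda>(w, z). f w z) \<in> borel_measurable (borel \<Otimes>\<^sub>M P)"
    and g: "g \<in> borel_measurable M" and Y: "\<And>i. i \<in> S \<Longrightarrow> Y i \<in> measurable M P"
  shows "(\<lambda>x. emp_loss f (\<lambda>i. Y i x) S (g x)) \<in> borel_measurable M"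
proof -
  have "(\<lambda>x. f (g x) (Y i x)) \<in> borel_measurable M" if "i \<in> S" for i
    using measurable_compose[OF measurable_Pair[OF g Y[OF that]] f] by simp
  then show ?thesis
    unfolding emp_loss_def by (intro borel_measurable_divide borel_measurable_sum) auto
qed

lemma borel_measurable_reg_risk:
  fixes f :: "'w::euclidean_space \<Rightarrow> 'z \<Rightarrow> real"
  assumes f: "(\<lambda>(w, z). f w z) \<in> borel_measurable (borel \<Otimes>\<^sub>M P)"
    and g: "g \<in> borel_measurable M" and Y: "\<And>i. i \<in> S \<Longrightarrow> Y i \<in> measurable M P"
  shows "(\<lambda>x. reg_risk f (\<lambda>i. Y i x) S c \<gamma> \<alpha> (g x)) \<in> borel_measurable M"
proof -
  note [measurable] = borel_measurable_emp_loss[OF f g Y] g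
  show ?thesis unfolding reg_risk_def by measurable
qed

lemma continuous_on_emp_loss:
  assumes "\<And>i. i \<in> S \<Longrightarrow> continuous_on UNIV (\<lambda>w. f w (z i))"
  shows "continuous_on UNIV (emp_loss f z S)"
proof (cases "card S = 0")
  case False
  then show ?thesis unfolding emp_loss_def
    using assms by (intro continuous_on_divide continuous_on_sum continuous_on_const) auto
qed (simp add: emp_loss_def)

lemma continuous_on_reg_risk:
  fixes f :: "'w::real_normed_vector \<Rightarrow> 'z \<Rightarrow> real"
  assumes "\<And>i. i \<in> S \<Longrightarrow> continuous_on UNIV (\<lambda>w. f w (z i))"
  shows "continuous_on UNIV (reg_risk f z S c \<gamma> \<alpha>)"
proof -
  have "continuous_on UNIV (emp_loss f z S)" by (rule continuous_on_emp_loss) (rule assms)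
  then show ?thesis unfolding reg_risk_def by (intro continuous_intros)
qed

lemma borel_measurable_SUP_emp_loss_dev:
  fixes f :: "'w::euclidean_space \<Rightarrow> 'z \<Rightarrow> real"
  assumes f: "(\<lambda>(w, z). f w z) \<in> borel_measurable (borel \<Otimes>\<^sub>M P)"
    and f_cont: "\<forall>z\<in>space P. continuous_on UNIV (\<lambda>w. f w z)"
    and L: "continuous_on UNIV L" and Y: "\<And>i. i \<in> S \<Longrightarrow> Y i \<in> measurable M P"
  shows "(\<lambda>x. SUP w. ennreal \<bar>L w - emp_loss f (\<lambda>i. Y i x) S w\<bar>) \<in> borel_measurable M"
proof (rule borel_measurable_SUP_continuous)
  fix x assume "x \<in> space M"
  then have "continuous_on UNIV (emp_loss f (\<lambda>i. Y i x) S)"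
    using f_cont measurable_space[OF Y] by (intro continuous_on_emp_loss) blast
  then show "continuous_on UNIV (\<lambda>w. ennreal \<bar>L w - emp_loss f (\<lambda>i. Y i x) S w\<bar>)"
    using L by (intro continuous_on_ennreal continuous_on_rabs continuous_on_diff)
next
  fix w
  note [measurable] = borel_measurable_emp_loss[OF f measurable_const Y, of w]
  show "(\<lambda>x. ennreal \<bar>L w - emp_loss f (\<lambda>i. Y i x) S w\<bar>) \<in> borel_measurable M" by measurable
qed

text \<open>The minimiser ws need not be measurable: the gap is the supremum over w of the continuous
  functions R x (g x) - R x w, hence a supremum over a countable dense set.\<close>
lemma borel_measurable_reg_risk_gap:
  fixes f :: "'w::euclidean_space \<Rightarrow> 'z \<Rightarrow> real" and Y :: "nat \<Rightarrow> 'm \<Rightarrow> 'z"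
    and S :: "nat set" and c \<gamma> \<alpha> :: real
  defines "R x \<equiv> reg_risk f (\<lambda>i. Y i x) S c \<gamma> \<alpha>"
  assumes f: "(\<lambda>(w, z). f w z) \<in> borel_measurable (borel \<Otimes>\<^sub>M P)"
    and f_cont: "\<forall>z\<in>space P. continuous_on UNIV (\<lambda>w. f w z)"
    and Y: "\<And>i. i \<in> S \<Longrightarrow> Y i \<in> measurable M P" and g: "g \<in> borel_measurable M"
    and ws: "\<forall>x\<in>space M. \<forall>w. R x (ws x) \<le> R x w"
  shows "(\<lambda>x. ennreal (R x (g x) - R x (ws x))) \<in> borel_measurable M"
proof -
  have "(\<lambda>x. SUP w. ennreal (R x (g x) - R x w)) \<in> borel_measurable M"
  proof (rule borel_measurable_SUP_continuous)
    fix x assume "x \<in> space M"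
    then have "continuous_on UNIV (R x)"
      unfolding R_def using f_cont measurable_space[OF Y] by (intro continuous_on_reg_risk) blast
    then show "continuous_on UNIV (\<lambda>w. ennreal (R x (g x) - R x w))"
      by (intro continuous_on_ennreal continuous_on_diff continuous_on_const)
  next
    fix w
    note [measurable] = borel_measurable_reg_risk[OF f g Y] borel_measurable_reg_risk[OF f measurable_const Y, of w]
    show "(\<lambda>x. ennreal (R x (g x) - R x w)) \<in> borel_measurable M" unfolding R_def by measurable
  qed
  then show ?thesis
    by (rule measurable_cong[THEN iffD1, rotated]) (simp add: SUP_ennreal_diff_minimizer ws)
qed

lemma convex_on_exp_loss:
  assumes int: "\<forall>w. integrable P (f w)" and conv: "\<forall>z\<in>space P. convex_on UNIV (\<lambda>w. f w z)"
  shows "convex_on UNIV (exp_loss P f)"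
proof (rule convex_onI)
  fix s :: real and x y assume s: "0 < s" "s < 1"
  have "exp_loss P f ((1 - s) *\<^sub>R x + s *\<^sub>R y) \<le> (\<integral>z. (1 - s) * f x z + s * f y z \<partial>P)"
    unfolding exp_loss_def
  proof (rule integral_mono)
    fix z assume "z \<in> space P"
    then show "f ((1 - s) *\<^sub>R x + s *\<^sub>R y) z \<le> (1 - s) * f x z + s * f y z"
      using convex_onD[of UNIV "\<lambda>w. f w z" s x y] conv s by simp
  qed (use int in auto)
  also have "\<dots> = (1 - s) * exp_loss P f x + s * exp_loss P f y"
    using int by (simp add: exp_loss_def)
  finally show "exp_loss P f ((1 - s) *\<^sub>R x + s *\<^sub>R y) \<le> (1 - s) * exp_loss P f x + s * exp_loss P f y" .
qed simp

lemma emp_loss_split_halves: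
  assumes "finite S" "T \<subseteq> S" "card S = 2 * card T"
  shows "emp_loss f z S w = (emp_loss f z T w + emp_loss f z (S - T) w) / 2"
proof -
  have "card (S - T) = card T"
    using assms card_Diff_subset[of T S] finite_subset by fastforce
  moreover have "(\<Sum>i\<in>S. f w (z i)) = (\<Sum>i\<in>S - T. f w (z i)) + (\<Sum>i\<in>T. f w (z i))"
    using assms by (intro sum.subset_diff)
  ultimately show ?thesis
    unfolding emp_loss_def using assms by (simp add: field_simps add_divide_distrib)
qed

lemma stat_acc_mult:
  assumes "0 < k"
  shows "stat_acc \<gamma> \<alpha> m = real k powr \<alpha> * stat_acc \<gamma> \<alpha> (k * m)"
  using assms by (cases "m = 0") (simp_all add: stat_acc_def powr_mult)

lemma reg_risk_split_gap_le:
  fixes f :: "'w::real_normed_vector \<Rightarrow> 'z \<Rightarrow> real" and L :: "'w \<Rightarrow> real"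
    and z :: "nat \<Rightarrow> 'z" and Sm Sn :: "nat set" and c \<gamma> \<alpha> :: real
  defines "R S \<equiv> reg_risk f z S c \<gamma> \<alpha>" and "D S w \<equiv> \<bar>L w - emp_loss f z S w\<bar>"
  assumes fin: "finite Sn" and sub: "Sm \<subseteq> Sn" and card: "card Sn = 2 * card Sm"
    and c: "0 \<le> c" and \<gamma>: "0 \<le> \<gamma>" and \<alpha>: "0 \<le> \<alpha>"
    and wm: "\<forall>v. R Sm wm \<le> R Sm v" and wn: "\<forall>v. R Sn wn \<le> R Sn v"
    and wstar: "\<forall>v. L wstar \<le> L v"
  shows "R Sn w - R Sn wn \<le> (R Sm w - R Sm wm)
      + (D Sm w + D Sm wn) / 2 + (D (Sn - Sm) w + D (Sn - Sm) wn) / 2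
      + (2 powr \<alpha> - 1) * (D Sn wstar + D Sn wn)
      + (2 powr \<alpha> - 1) * (c * stat_acc \<gamma> \<alpha> (card Sn) / 2) * (norm wstar)\<^sup>2"
proof -
  define t where "t = 2 powr \<alpha>"
  define \<kappa> where "\<kappa> = c * stat_acc \<gamma> \<alpha> (card Sn) / 2"
  define e a b where "e = emp_loss f z Sn" and "a = emp_loss f z Sm" and "b = emp_loss f z (Sn - Sm)"
  have t: "1 \<le> t" unfolding t_def using \<alpha> by (simp add: ge_one_powr_ge_zero)
  have \<kappa>: "0 \<le> \<kappa>" unfolding \<kappa>_def using c \<gamma> by (simp add: stat_acc_def)
  have e: "e x = (a x + b x) / 2" for x
    unfolding e_def a_def b_def using emp_loss_split_halves[OF fin sub card] .
  have Rn: "R Sn x = e x + \<kappa> * (norm x)\<^sup>2" for x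
    unfolding R_def e_def \<kappa>_def reg_risk_def ..
  have Rm: "R Sm x = a x + t * \<kappa> * (norm x)\<^sup>2" for x
    using stat_acc_mult[of 2 \<gamma> \<alpha> "card Sm"]
    unfolding R_def a_def \<kappa>_def t_def reg_risk_def card by simp
  have split: "R Sn w - R Sn wn \<le> (R Sm w - R Sm wm) + ((b w - a w) / 2 - (b wn - a wn) / 2)
      + (t - 1) * (\<kappa> * (norm wn)\<^sup>2) - (t - 1) * (\<kappa> * (norm w)\<^sup>2)"
    using wm[rule_format, of wn] unfolding Rn Rm e by (simp add: field_simps)
  have dev: "(b w - a w) / 2 - (b wn - a wn) / 2
      \<le> (D Sm w + D Sm wn) / 2 + (D (Sn - Sm) w + D (Sn - Sm) wn) / 2"
    unfolding D_def a_def b_def by (simp add: abs_if field_simps)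
  have "(t - 1) * (\<kappa> * (norm wn)\<^sup>2)
      \<le> (t - 1) * (D Sn wstar + D Sn wn + \<kappa> * (norm wstar)\<^sup>2)"
    using wn[rule_format, of wstar] wstar[rule_format, of wn] t
    unfolding Rn D_def e_def by (intro mult_left_mono) auto
  then have surplus: "(t - 1) * (\<kappa> * (norm wn)\<^sup>2)
      \<le> (t - 1) * (D Sn wstar + D Sn wn) + (t - 1) * \<kappa> * (norm wstar)\<^sup>2"
    by (simp add: distrib_left mult.assoc)
  have "0 \<le> (t - 1) * (\<kappa> * (norm w)\<^sup>2)" using t \<kappa> by simp
  with split dev surplus have "R Sn w - R Sn wn \<le> (R Sm w - R Sm wm)
      + (D Sm w + D Sm wn) / 2 + (D (Sn - Sm) w + D (Sn - Sm) wn) / 2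
      + (t - 1) * (D Sn wstar + D Sn wn) + (t - 1) * \<kappa> * (norm wstar)\<^sup>2"
    by linarith
  then show ?thesis unfolding t_def \<kappa>_def .
qed

lemma ennreal_reg_risk_split_gap_le:
  fixes f :: "'w::real_normed_vector \<Rightarrow> 'z \<Rightarrow> real" and L :: "'w \<Rightarrow> real"
    and z :: "nat \<Rightarrow> 'z" and Sm Sn :: "nat set" and c \<gamma> \<alpha> :: real
  defines "R S \<equiv> reg_risk f z S c \<gamma> \<alpha>" and "A S \<equiv> SUP w. ennreal \<bar>L w - emp_loss f z S w\<bar>"
  assumes fin: "finite Sn" and sub: "Sm \<subseteq> Sn" and card: "card Sn = 2 * card Sm"
    and c: "0 \<le> c" and \<gamma>: "0 \<le> \<gamma>" and \<alpha>: "0 \<le> \<alpha>"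
    and wm: "\<forall>v. R Sm wm \<le> R Sm v" and wn: "\<forall>v. R Sn wn \<le> R Sn v"
    and wstar: "\<forall>v. L wstar \<le> L v"
  shows "ennreal (R Sn w - R Sn wn) \<le> ennreal (R Sm w - R Sm wm) + A Sm + A (Sn - Sm)
      + ennreal (2 * (2 powr \<alpha> - 1)) * A Sn
      + ennreal ((2 powr \<alpha> - 1) * (c * stat_acc \<gamma> \<alpha> (card Sn) / 2) * (norm wstar)\<^sup>2)"
proof -
  define D where "D S v = \<bar>L v - emp_loss f z S v\<bar>" for S v
  define C where "C = (2 powr \<alpha> - 1) * (c * stat_acc \<gamma> \<alpha> (card Sn) / 2) * (norm wstar)\<^sup>2"
  define k where "k = 2 * (2 powr \<alpha> - 1)"
  define p q r where "p = (D Sm w + D Sm wn) / 2" and "q = (D (Sn - Sm) w + D (Sn - Sm) wn) / 2"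
    and "r = (D Sn wstar + D Sn wn) / 2"
  have k: "0 \<le> k" unfolding k_def using \<alpha> by (simp add: ge_one_powr_ge_zero)
  have nonneg: "0 \<le> C" "0 \<le> R Sm w - R Sm wm" "0 \<le> p" "0 \<le> q" "0 \<le> r"
    unfolding C_def p_def q_def r_def D_def using k c \<gamma> wm by (simp_all add: k_def stat_acc_def)
  have "R Sn w - R Sn wn \<le> (R Sm w - R Sm wm) + p + q + k * r + C"
    using reg_risk_split_gap_le[OF fin sub card c \<gamma> \<alpha>, of f z wm wn L wstar w] wm wn wstar
    unfolding R_def D_def C_def k_def p_def q_def r_def by (simp add: field_simps)
  then have "ennreal (R Sn w - R Sn wn) \<le> ennreal ((R Sm w - R Sm wm) + p + q + k * r + C)"
    by (rule ennreal_leI)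
  also have "\<dots> = ennreal (R Sm w - R Sm wm) + ennreal p + ennreal q + ennreal k * ennreal r + ennreal C"
    using nonneg k by (simp add: ennreal_mult)
  also have "\<dots> \<le> ennreal (R Sm w - R Sm wm) + A Sm + A (Sn - Sm) + ennreal k * A Sn + ennreal C"
    unfolding A_def p_def q_def r_def D_def
    by (intro add_mono mult_left_mono order_refl ennreal_midpoint_le SUP_upper) auto
  finally show ?thesis unfolding C_def k_def .
qed

lemma (in prob_space) nn_integral_SUP_emp_loss_dev_le:
  fixes f :: "'w \<Rightarrow> 'z \<Rightarrow> real" and Z :: "nat \<Rightarrow> 'a \<Rightarrow> 'z"
  assumes acc: "\<forall>k\<ge>1. \<forall>Y :: nat \<Rightarrow> 'a \<Rightarrow> 'z.
        (indep_vars (\<lambda>_. P) Y {..<k} \<and> (\<forall>i<k. distr M P (Y i) = P)) \<longrightarrow>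
        (\<integral>\<^sup>+ x. (SUP w. ennreal \<bar>exp_loss P f w - emp_loss f (\<lambda>i. Y i x) {..<k} w\<bar>) \<partial>M)
          \<le> ennreal (stat_acc \<gamma> \<alpha> k)"
    and indep: "indep_vars (\<lambda>_. P) Z I" and distr: "\<forall>i\<in>I. distr M P (Z i) = P"
    and S: "S \<subseteq> I" "finite S" "1 \<le> card S"
  shows "(\<integral>\<^sup>+ x. (SUP w. ennreal \<bar>exp_loss P f w - emp_loss f (\<lambda>i. Z i x) S w\<bar>) \<partial>M)
    \<le> ennreal (stat_acc \<gamma> \<alpha> (card S))"
proof -
  obtain e where e: "bij_betw e {..<card S} S"
    using ex_bij_betw_nat_finite[OF S(2)] by (auto simp: atLeast0LessThan)
  have "indep_vars (\<lambda>_. P) (\<lambda>i. Z (e i)) {..<card S}"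
    using indep_vars_reindex[OF indep, of e] e S(1) unfolding bij_betw_def by auto
  moreover have "\<forall>i<card S. distr M P (Z (e i)) = P"
    using distr e S(1) unfolding bij_betw_def by auto
  ultimately have "(\<integral>\<^sup>+ x. (SUP w. ennreal \<bar>exp_loss P f w - emp_loss f (\<lambda>i. Z (e i) x) {..<card S} w\<bar>) \<partial>M)
      \<le> ennreal (stat_acc \<gamma> \<alpha> (card S))"
    using acc S(3) by blast
  moreover have "emp_loss f (\<lambda>i. Z (e i) x) {..<card S} w = emp_loss f (\<lambda>i. Z i x) S w" for x w
    unfolding emp_loss_def using sum.reindex_bij_betw[OF e, of "\<lambda>i. f w (Z i x)"] e
    by (simp add: bij_betw_same_card)
  ultimately show ?thesis by simp
qed

lemma nn_integral_pair_le_rate: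
  assumes N: "sigma_finite_measure N" and F: "F \<in> borel_measurable (M \<Otimes>\<^sub>M N)"
    and X: "(\<lambda>x. ennreal (X x)) \<in> borel_measurable M" and r: "0 \<le> r"
    and rate: "\<And>x. x \<in> space M \<Longrightarrow> (\<integral>\<^sup>+ y. F (x, y) \<partial>N) \<le> ennreal (r * X x)"
    and bound: "(\<integral>\<^sup>+ x. ennreal (X x) \<partial>M) \<le> ennreal B"
  shows "(\<integral>\<^sup>+ p. F p \<partial>(M \<Otimes>\<^sub>M N)) \<le> ennreal (r * B)"
proof -
  have "(\<integral>\<^sup>+ p. F p \<partial>(M \<Otimes>\<^sub>M N)) = (\<integral>\<^sup>+ x. \<integral>\<^sup>+ y. F (x, y) \<partial>N \<partial>M)"
    using sigma_finite_measure.nn_integral_fst[OF N F] by simp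
  also have "\<dots> \<le> (\<integral>\<^sup>+ x. ennreal r * ennreal (X x) \<partial>M)"
    by (intro nn_integral_mono) (simp add: rate ennreal_mult'[OF r, symmetric])
  also have "\<dots> = ennreal r * (\<integral>\<^sup>+ x. ennreal (X x) \<partial>M)"
    using X by (rule nn_integral_cmult)
  also have "\<dots> \<le> ennreal (r * B)"
    using bound r by (simp add: ennreal_mult' mult_left_mono)
  finally show ?thesis .
qed

lemma (in prob_space) nn_integral_warm_start_gap_le:
  fixes f :: "'w::euclidean_space \<Rightarrow> 'z \<Rightarrow> real" and Z :: "nat \<Rightarrow> 'a \<Rightarrow> 'z"
    and Sm Sn :: "nat set" and c \<gamma> \<alpha> :: real
  defines "R S x \<equiv> reg_risk f (\<lambda>i. Z i x) S c \<gamma> \<alpha>"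
  assumes f: "(\<lambda>(w, z). f w z) \<in> borel_measurable (borel \<Otimes>\<^sub>M P)"
    and f_cont: "\<forall>z\<in>space P. continuous_on UNIV (\<lambda>w. f w z)"
    and L_cont: "continuous_on UNIV (exp_loss P f)"
    and Z: "\<And>i. i \<in> Sn \<Longrightarrow> Z i \<in> measurable M P"
    and dev: "\<And>S. S \<subseteq> Sn \<Longrightarrow> 1 \<le> card S \<Longrightarrow>
      (\<integral>\<^sup>+ x. (SUP w. ennreal \<bar>exp_loss P f w - emp_loss f (\<lambda>i. Z i x) S w\<bar>) \<partial>M)
        \<le> ennreal (stat_acc \<gamma> \<alpha> (card S))"
    and fin: "finite Sn" and sub: "Sm \<subseteq> Sn" and card: "card Sn = 2 * card Sm" "1 \<le> card Sm"
    and c: "0 \<le> c" and \<gamma>: "0 \<le> \<gamma>" and \<alpha>: "0 \<le> \<alpha>"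
    and wstar: "\<forall>v. exp_loss P f wstar \<le> exp_loss P f v"
    and wmstar: "\<forall>x\<in>space M. \<forall>v. R Sm x (wmstar x) \<le> R Sm x v"
    and wnstar: "\<forall>x\<in>space M. \<forall>v. R Sn x (wnstar x) \<le> R Sn x v"
    and wm: "wm \<in> borel_measurable M"
    and wm_acc: "(\<integral>\<^sup>+ x. ennreal (R Sm x (wm x) - R Sm x (wmstar x)) \<partial>M) \<le> ennreal (stat_acc \<gamma> \<alpha> (card Sm))"
  shows "(\<integral>\<^sup>+ x. ennreal (R Sn x (wm x) - R Sn x (wnstar x)) \<partial>M)
    \<le> ennreal ((3 * 2 powr \<alpha> + (2 powr \<alpha> - 1) * (2 + c / 2 * (norm wstar)\<^sup>2)) * stat_acc \<gamma> \<alpha> (card Sn))"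
proof -
  define t Vm Vn where "t = 2 powr \<alpha>" and "Vm = stat_acc \<gamma> \<alpha> (card Sm)"
    and "Vn = stat_acc \<gamma> \<alpha> (card Sn)"
  define A where "A S x = (SUP w. ennreal \<bar>exp_loss P f w - emp_loss f (\<lambda>i. Z i x) S w\<bar>)" for S x
  define G where "G x = ennreal (R Sm x (wm x) - R Sm x (wmstar x))" for x
  define C where "C = (t - 1) * (c * Vn / 2) * (norm wstar)\<^sup>2"
  have Vm: "Vm = t * Vn"
    unfolding t_def Vm_def Vn_def card(1) using stat_acc_mult[of 2 \<gamma> \<alpha> "card Sm"] by simp
  have t: "1 \<le> t" unfolding t_def using \<alpha> by (simp add: ge_one_powr_ge_zero)
  have Vn: "0 \<le> Vn" unfolding Vn_def stat_acc_def using \<gamma> by simp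
  have "card (Sn - Sm) = card Sm"
    using card card_Diff_subset[OF finite_subset[OF sub fin] sub] by simp
  then have dev_bounds: "integral\<^sup>N M (A Sm) \<le> ennreal Vm" "integral\<^sup>N M (A (Sn - Sm)) \<le> ennreal Vm"
      "integral\<^sup>N M (A Sn) \<le> ennreal Vn"
    unfolding A_def Vm_def Vn_def using dev[of Sm] dev[of "Sn - Sm"] dev[of Sn] sub card by auto
  have A_meas: "A S \<in> borel_measurable M" if "S \<subseteq> Sn" for S
    unfolding A_def using that Z by (intro borel_measurable_SUP_emp_loss_dev[OF f f_cont L_cont]) blast
  have G_meas: "G \<in> borel_measurable M"
    unfolding G_def R_def using sub Z wmstar[unfolded R_def]
    by (intro borel_measurable_reg_risk_gap[OF f f_cont _ wm]) auto
  note [measurable] = G_meas A_meas[OF sub] A_meas[OF Diff_subset] A_meas[OF order_refl]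
  have "(\<integral>\<^sup>+ x. ennreal (R Sn x (wm x) - R Sn x (wnstar x)) \<partial>M)
      \<le> (\<integral>\<^sup>+ x. G x + A Sm x + A (Sn - Sm) x + ennreal (2 * (t - 1)) * A Sn x + ennreal C \<partial>M)"
    unfolding R_def G_def A_def t_def C_def Vn_def using wmstar wnstar wstar
    by (intro nn_integral_mono ennreal_reg_risk_split_gap_le[OF fin sub card(1) c \<gamma> \<alpha>])
      (auto simp: R_def)
  also have "\<dots> = integral\<^sup>N M G + integral\<^sup>N M (A Sm) + integral\<^sup>N M (A (Sn - Sm))
      + ennreal (2 * (t - 1)) * integral\<^sup>N M (A Sn) + ennreal C"
    by (simp add: nn_integral_add nn_integral_cmult emeasure_space_1)
  also have "\<dots> \<le> ennreal Vm + ennreal Vm + ennreal Vm + ennreal (2 * (t - 1)) * ennreal Vn + ennreal C"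
    using wm_acc dev_bounds unfolding G_def Vm_def by (intro add_mono mult_left_mono) auto
  also have "\<dots> = ennreal (3 * Vm + 2 * (t - 1) * Vn + C)"
    using t Vn c unfolding Vm C_def
    by (simp add: ennreal_mult[symmetric] ennreal_plus[symmetric] del: ennreal_plus)
  also have "3 * Vm + 2 * (t - 1) * Vn + C = (3 * t + (t - 1) * (2 + c / 2 * (norm wstar)\<^sup>2)) * Vn"
    unfolding Vm C_def by (simp add: algebra_simps)
  finally show ?thesis unfolding t_def Vn_def .
qed

lemma nn_integral_linear_convergence_le:
  fixes f :: "'w::euclidean_space \<Rightarrow> 'z \<Rightarrow> real" and Z :: "nat \<Rightarrow> 'm \<Rightarrow> 'z"
    and S :: "nat set" and c \<gamma> \<alpha> :: real and U :: "'m \<Rightarrow> 'w \<Rightarrow> nat \<Rightarrow> 'x \<Rightarrow> 'w"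
  defines "R x \<equiv> reg_risk f (\<lambda>i. Z i x) S c \<gamma> \<alpha>"
  assumes f: "(\<lambda>(w, z). f w z) \<in> borel_measurable (borel \<Otimes>\<^sub>M P)"
    and f_cont: "\<forall>z\<in>space P. continuous_on UNIV (\<lambda>w. f w z)"
    and Z: "\<And>i. i \<in> S \<Longrightarrow> Z i \<in> measurable M P" and \<Xi>: "sigma_finite_measure \<Xi>"
    and ws: "\<forall>x\<in>space M. \<forall>v. R x (ws x) \<le> R x v"
    and u0: "u0 \<in> borel_measurable M"
    and U: "(\<lambda>(x, \<xi>). U x (u0 x) s \<xi>) \<in> borel_measurable (M \<Otimes>\<^sub>M \<Xi>)"
    and \<rho>: "0 \<le> \<rho>"
    and rate: "\<forall>x\<in>space M. (\<integral>\<^sup>+ \<xi>. ennreal (R x (U x (u0 x) s \<xi>) - R x (ws x)) \<partial>\<Xi>)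
      \<le> ennreal (\<rho> ^ s * (R x (u0 x) - R x (ws x)))"
    and start: "(\<integral>\<^sup>+ x. ennreal (R x (u0 x) - R x (ws x)) \<partial>M) \<le> ennreal B"
  shows "(\<integral>\<^sup>+ p. ennreal (R (fst p) (U (fst p) (u0 (fst p)) s (snd p)) - R (fst p) (ws (fst p)))
    \<partial>(M \<Otimes>\<^sub>M \<Xi>)) \<le> ennreal (\<rho> ^ s * B)"
proof (rule nn_integral_pair_le_rate[OF \<Xi> _ _ _ _ start])
  show "(\<lambda>x. ennreal (R x (u0 x) - R x (ws x))) \<in> borel_measurable M"
    unfolding R_def using Z ws[unfolded R_def]
    by (intro borel_measurable_reg_risk_gap[OF f f_cont _ u0]) auto
  show "(\<lambda>p. ennreal (R (fst p) (U (fst p) (u0 (fst p)) s (snd p)) - R (fst p) (ws (fst p))))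
      \<in> borel_measurable (M \<Otimes>\<^sub>M \<Xi>)"
    unfolding R_def
  proof (rule borel_measurable_reg_risk_gap[OF f f_cont])
    show "(\<lambda>p. Z i (fst p)) \<in> measurable (M \<Otimes>\<^sub>M \<Xi>) P" if "i \<in> S" for i
      using measurable_compose[OF measurable_fst[of M \<Xi>] Z[OF that]] by simp
    show "(\<lambda>p. U (fst p) (u0 (fst p)) s (snd p)) \<in> borel_measurable (M \<Otimes>\<^sub>M \<Xi>)"
      using U by (simp add: case_prod_unfold)
  qed (use ws in \<open>auto simp: R_def space_pair_measure\<close>)
qed (use \<rho> rate in auto)

lemma power_mult_le_one_if_ln_bound:
  fixes \<rho> K :: real
  assumes \<rho>: "0 < \<rho>" "\<rho> < 1" and K: "0 < K" and s: "- ln K / ln \<rho> \<le> real s"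
  shows "\<rho> ^ s * K \<le> 1"
proof -
  have "ln \<rho> < 0" using \<rho> by simp
  then have "real s * ln \<rho> \<le> - ln K"
    using mult_right_mono_neg[OF s, of "ln \<rho>"] by simp
  then have "ln (\<rho> ^ s * K) \<le> 0"
    using \<rho> K by (simp add: ln_mult ln_realpow)
  then show ?thesis using \<rho> K by simp
qed

theorem theorem2:
  fixes P :: "'z measure" and \<Omega> :: "'o measure" and \<Xi> :: "'x measure"
    and f :: "'w::euclidean_space \<Rightarrow> 'z \<Rightarrow> real"
    and M c \<gamma> \<alpha> \<rho> :: real and N m n sn :: nat
    and Z :: "nat \<Rightarrow> 'o \<Rightarrow> 'z"
    and Im In :: "nat set"
    and wstar :: 'w and wm wmstar wnstar :: "'o \<Rightarrow> 'w"
    and U :: "'o \<Rightarrow> 'w \<Rightarrow> nat \<Rightarrow> 'x \<Rightarrow> 'w"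
  assumes P: "prob_space P"
    and \<Omega>: "prob_space \<Omega>"
    and \<Xi>: "prob_space \<Xi>"
    \<comment> \<open>loss: measurable, integrable, convex with M-Lipschitz gradient in w\<close>
    and f_meas: "(\<lambda>(w, z). f w z) \<in> borel_measurable (borel \<Otimes>\<^sub>M P)"
    and f_int: "\<forall>w. integrable P (f w)"
    and f_convex: "\<forall>z\<in>space P. convex_on UNIV (\<lambda>w. f w z)"
    and f_smooth: "\<forall>z\<in>space P. \<exists>g :: 'w \<Rightarrow> 'w.
        (\<forall>w. ((\<lambda>v. f v z) has_derivative (\<lambda>h. g w \<bullet> h)) (at w)) \<and>
        (\<forall>w v. norm (g w - g v) \<le> M * norm (w - v))"
    \<comment> \<open>w* minimizes the expected loss\<close>
    and wstar: "\<forall>w. exp_loss P f wstar \<le> exp_loss P f w"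
    \<comment> \<open>constants\<close>
    and c: "c > 0" and \<gamma>: "\<gamma> > 0" and \<alpha>: "1/2 \<le> \<alpha>" "\<alpha> \<le> 1"
    \<comment> \<open>statistical accuracy: for every k and every k independent samples from P\<close>
    and stat_acc: "\<forall>k\<ge>1. \<forall>Y :: nat \<Rightarrow> 'o \<Rightarrow> 'z.
        (prob_space.indep_vars \<Omega> (\<lambda>_. P) Y {..<k} \<and> (\<forall>i<k. distr \<Omega> P (Y i) = P)) \<longrightarrow>
        (\<integral>\<^sup>+ \<omega>. (SUP w. ennreal \<bar>exp_loss P f w - emp_loss f (\<lambda>i. Y i \<omega>) {..<k} w\<bar>) \<partial>\<Omega>)
          \<le> ennreal (stat_acc \<gamma> \<alpha> k)"
    \<comment> \<open>training set: N independent samples from P\<close>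
    and Z_indep: "prob_space.indep_vars \<Omega> (\<lambda>_. P) Z {..<N}"
    and Z_distr: "\<forall>i<N. distr \<Omega> P (Z i) = P"
    \<comment> \<open>nested subsets S_m of size m and S_n of size n = 2m\<close>
    and m: "m \<ge> 1" and n: "n = 2 * m"
    and sub: "Im \<subseteq> In" "In \<subseteq> {..<N}" and card: "card Im = m" "card In = n"
    \<comment> \<open>minimizers of the regularized risks\<close>
    and wmstar: "\<forall>\<omega>\<in>space \<Omega>. \<forall>w. reg_risk f (\<lambda>i. Z i \<omega>) Im c \<gamma> \<alpha> (wmstar \<omega>)
                                     \<le> reg_risk f (\<lambda>i. Z i \<omega>) Im c \<gamma> \<alpha> w"
    and wnstar: "\<forall>\<omega>\<in>space \<Omega>. \<forall>w. reg_risk f (\<lambda>i. Z i \<omega>) In c \<gamma> \<alpha> (wnstar \<omega>)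
                                     \<le> reg_risk f (\<lambda>i. Z i \<omega>) In c \<gamma> \<alpha> w"
    \<comment> \<open>w_m is V_m-accurate for R_m in expectation\<close>
    and wm_meas: "wm \<in> borel_measurable \<Omega>"
    and wm_acc: "(\<integral>\<^sup>+ \<omega>. ennreal (reg_risk f (\<lambda>i. Z i \<omega>) Im c \<gamma> \<alpha> (wm \<omega>)
                                 - reg_risk f (\<lambda>i. Z i \<omega>) Im c \<gamma> \<alpha> (wmstar \<omega>)) \<partial>\<Omega>)
                 \<le> ennreal (stat_acc \<gamma> \<alpha> m)"
    \<comment> \<open>the method applied to R_n is linearly convergent with factor rho\<close>
    and \<rho>: "0 < \<rho>" "\<rho> < 1"
    and lin_conv: "\<forall>\<omega>\<in>space \<Omega>. \<forall>u0 s.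
        (\<integral>\<^sup>+ \<xi>. ennreal (reg_risk f (\<lambda>i. Z i \<omega>) In c \<gamma> \<alpha> (U \<omega> u0 s \<xi>)
                          - reg_risk f (\<lambda>i. Z i \<omega>) In c \<gamma> \<alpha> (wnstar \<omega>)) \<partial>\<Xi>)
        \<le> ennreal (\<rho> ^ s * (reg_risk f (\<lambda>i. Z i \<omega>) In c \<gamma> \<alpha> u0
                             - reg_risk f (\<lambda>i. Z i \<omega>) In c \<gamma> \<alpha> (wnstar \<omega>)))"
    and wn_meas: "(\<lambda>(\<omega>, \<xi>). U \<omega> (wm \<omega>) sn \<xi>) \<in> borel_measurable (\<Omega> \<Otimes>\<^sub>M \<Xi>)"
    \<comment> \<open>number of iterations\<close>
    and sn: "real sn \<ge> - ln (3 * 2 powr \<alpha> + (2 powr \<alpha> - 1) * (2 + c / 2 * (norm wstar)\<^sup>2)) / ln \<rho>"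
  shows "(\<integral>\<^sup>+ \<omega>\<xi>. ennreal (reg_risk f (\<lambda>i. Z i (fst \<omega>\<xi>)) In c \<gamma> \<alpha>
                              (U (fst \<omega>\<xi>) (wm (fst \<omega>\<xi>)) sn (snd \<omega>\<xi>))
                          - reg_risk f (\<lambda>i. Z i (fst \<omega>\<xi>)) In c \<gamma> \<alpha> (wnstar (fst \<omega>\<xi>)))
           \<partial>(\<Omega> \<Otimes>\<^sub>M \<Xi>))
         \<le> ennreal (stat_acc \<gamma> \<alpha> n)"
proof -
  interpret prob_space \<Omega> by (rule \<Omega>)
  define K where "K = 3 * 2 powr \<alpha> + (2 powr \<alpha> - 1) * (2 + c / 2 * (norm wstar)\<^sup>2)"
  define R where "R \<omega> = reg_risk f (\<lambda>i. Z i \<omega>) In c \<gamma> \<alpha>" for \<omega>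
  have Z: "Z i \<in> measurable \<Omega> P" if "i \<in> In" for i
    using Z_indep that sub(2) unfolding indep_vars_def2 by auto
  have f_cont: "\<forall>z\<in>space P. continuous_on UNIV (\<lambda>w. f w z)"
  proof
    fix z assume "z \<in> space P"
    then obtain g where "\<forall>w. ((\<lambda>v. f v z) has_derivative (\<lambda>h. g w \<bullet> h)) (at w)"
      using f_smooth by blast
    then show "continuous_on UNIV (\<lambda>w. f w z)" by (intro has_derivative_continuous_on) auto
  qed
  have L_cont: "continuous_on UNIV (exp_loss P f)"
    using convex_on_continuous[OF open_UNIV convex_on_exp_loss[OF f_int f_convex]] .
  have fin: "finite In" using sub(2) finite_subset by blast
  have dev: "(\<integral>\<^sup>+ x. (SUP w. ennreal \<bar>exp_loss P f w - emp_loss f (\<lambda>i. Z i x) S w\<bar>) \<partial>\<Omega>)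
      \<le> ennreal (stat_acc \<gamma> \<alpha> (card S))" if "S \<subseteq> In" "1 \<le> card S" for S
    using that Z_distr sub(2) finite_subset[OF _ fin]
    by (intro nn_integral_SUP_emp_loss_dev_le[OF stat_acc Z_indep]) auto
  have gap: "(\<integral>\<^sup>+ \<omega>. ennreal (R \<omega> (wm \<omega>) - R \<omega> (wnstar \<omega>)) \<partial>\<Omega>) \<le> ennreal (K * stat_acc \<gamma> \<alpha> n)"
    unfolding R_def K_def card(2)[symmetric]
    by (rule nn_integral_warm_start_gap_le[OF f_meas f_cont L_cont Z dev fin sub(1)])
      (use card m n c \<gamma> \<alpha> wstar wmstar wnstar wm_meas wm_acc in auto)
  have "0 < K"
    using \<alpha> c by (auto simp: K_def ge_one_powr_ge_zero intro!: add_pos_nonneg mult_nonneg_nonneg)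
  then have "\<rho> ^ sn * K \<le> 1"
    using power_mult_le_one_if_ln_bound[OF \<rho>] sn[folded K_def] by blast
  then have contraction: "\<rho> ^ sn * (K * stat_acc \<gamma> \<alpha> n) \<le> stat_acc \<gamma> \<alpha> n"
    using mult_right_mono[of "\<rho> ^ sn * K" 1 "stat_acc \<gamma> \<alpha> n"] \<gamma>
    by (simp add: mult.assoc stat_acc_def)
  show ?thesis
    by (rule order_trans[OF nn_integral_linear_convergence_le[where Z = Z] ennreal_leI[OF contraction]])
      (use f_meas f_cont Z prob_space_imp_sigma_finite[OF \<Xi>] wnstar wm_meas wn_meas \<rho> lin_conv
          gap[unfolded R_def] in auto)
qed

end
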